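(* Let $(\Omega,\mathcal{F},\mathbf{P})$ be a probability space with $\sigma$-fields $\{\emptyset,\Omega\}=\mathcal{F}_0\subseteq\mathcal{F}_1\subseteq\cdots\subseteq\mathcal{F}_n\subseteq\mathcal{F}$, and let $(\xi_i,\mathcal{F}_i)_{i=1,\dots,n}$ be a sequence of supermartingale differences, i.e. each $\xi_i$ is real-valued, $\mathcal{F}_i$-measurable, integrable, and $\mathbf{E}(\xi_i\mid\mathcal{F}_{i-1})\le 0$. Assume $\mathbf{E}\xi_i^2<\infty$ for all $i\in[1,n]$. Let $S_k=\sum_{i=1}^k\xi_i$ and, for $y\ge 0$, \[ \mathrm{G}_k^{y}=\sum_{i=1}^k\Big(\mathbf{E}\big(\xi_i^2\mathbf{1}_{\{\xi_i\le y\}}\mid\mathcal{F}_{i-1}\big)+\xi_i^2\mathbf{1}_{\{\xi_i>y\}}\Big),\qquad k=1,\dots,n. \] Then for all $x,y\ge 0$ and $v>0$, \[ \mathbf{P}\Big(S_k\ge x\ \text{and}\ \mathrm{G}_k^{y}\le v^2\ \text{for some}\ k\in[1,n]\Big)\le B_1(x,y,v)\le B_2(x,y,v), \] where for $y>0$ \[ B_1(x,y,v)=\left(\frac{v^2}{xy+v^2}\right)^{\frac{x}{y}+\frac{v^2}{y^2}}e^{x/y},\qquad B_2(x,y,v)=\exp\left\{-\frac{x^2}{2(v^2+xy/3)}\right\}, \] and for $y=0$ one sets $B_1(x,0,v)=\lim_{y\to0+}B_1(x,y,v)=B_2(x,0,v)=\exp\{-x^2/(2v^2)\}$. *)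

theory Defs
  imports "HOL-Probability.Probability"
begin

definition partial_sum :: "(nat \<Rightarrow> 'a \<Rightarrow> real) \<Rightarrow> nat \<Rightarrow> 'a \<Rightarrow> real" where
  "partial_sum \<xi> k \<omega> = (\<Sum>i=1..k. \<xi> i \<omega>)"

definition G_var :: "'a measure \<Rightarrow> (nat \<Rightarrow> 'a measure) \<Rightarrow> (nat \<Rightarrow> 'a \<Rightarrow> real) \<Rightarrow> real \<Rightarrow> nat \<Rightarrow> 'a \<Rightarrow> real" where
  "G_var M F \<xi> y k \<omega> =
     (\<Sum>i=1..k. real_cond_exp M (F (i - 1))
                   (\<lambda>w. (\<xi> i w)\<^sup>2 * indicator {w. \<xi> i w \<le> y} w) \<omega>
               + (\<xi> i \<omega>)\<^sup>2 * indicator {w. \<xi> i w > y} \<omega>)"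

definition B1 :: "real \<Rightarrow> real \<Rightarrow> real \<Rightarrow> real" where
  "B1 x y v = (if y = 0 then exp (- x\<^sup>2 / (2 * v\<^sup>2))
               else (v\<^sup>2 / (x * y + v\<^sup>2)) powr (x / y + v\<^sup>2 / y\<^sup>2) * exp (x / y))"

definition B2 :: "real \<Rightarrow> real \<Rightarrow> real \<Rightarrow> real" where
  "B2 x y v = exp (- x\<^sup>2 / (2 * (v\<^sup>2 + x * y / 3)))"

end

theory Submission
  imports Defs
begin

text \<open>
  For every \<open>\<lambda> \<ge> 0\<close> the elementary inequality
  \<open>exp (\<lambda>t - g t\<^sup>2 [t > y]) \<le> 1 + \<lambda>t + g t\<^sup>2 [t \<le> y]\<close>, with \<open>g = (e\<^sup>\<lambda>\<^sup>y - 1 - \<lambda>y) / y\<^sup>2\<close>,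
  makes \<open>Z\<^sub>k = exp (\<lambda> S\<^sub>k - g G\<^sub>k\<^sup>y)\<close> a positive supermartingale: the linear term is killed by
  \<open>E(\<xi>\<^sub>i | F\<^sub>i\<^sub>-\<^sub>1) \<le> 0\<close> and the truncated square by the conditional part of \<open>G\<^sup>y\<close>.
  On the event \<open>S\<^sub>k \<ge> x, G\<^sub>k\<^sup>y \<le> v\<^sup>2\<close> one has \<open>Z\<^sub>k \<ge> exp (\<lambda>x - g v\<^sup>2)\<close>, so optional stopping
  at the first such \<open>k\<close> bounds its probability by \<open>exp (-\<lambda>x + g v\<^sup>2)\<close>.  Minimising over \<open>\<lambda>\<close>
  gives Bennett's bound \<open>B\<^sub>1\<close>, and \<open>(1+u) ln (1+u) - u \<ge> u\<^sup>2 / (2 (1 + u/3))\<close> turns it into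
  Bernstein's bound \<open>B\<^sub>2\<close>.
\<close>

section \<open>Elementary inequalities\<close>

lemma exp_le_quadratic_Taylor_nonpos:
  fixes s :: real
  assumes "s \<le> 0"
  shows "exp s \<le> 1 + s + s\<^sup>2/2"
proof -
  define G where "G = (\<lambda>t::real. exp t - 1 - t - t\<^sup>2/2)"
  have "G s \<le> G 0"
  proof (rule deriv_nonneg_imp_mono[of s 0 G "\<lambda>t. exp t - 1 - t"])
    fix t assume "t \<in> {s..0}"
    show "(G has_real_derivative exp t - 1 - t) (at t)" unfolding G_def
      by (auto intro!: derivative_eq_intros)
    show "0 \<le> exp t - 1 - t" using exp_ge_add_one_self[of t] by linarith
  qed (use assms in auto)
  then show ?thesis by (simp add: G_def)
qed

lemma ln_add_one_ge_quadratic: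
  fixes s :: real
  assumes "0 \<le> s"
  shows "s - s\<^sup>2/2 \<le> ln (1 + s)"
proof -
  define G where "G = (\<lambda>t::real. ln (1+t) - t + t\<^sup>2/2)"
  have "G 0 \<le> G s"
  proof (rule deriv_nonneg_imp_mono[of 0 s G "\<lambda>t. 1/(1+t) - 1 + t"])
    fix t assume t: "t \<in> {0..s}"
    show "(G has_real_derivative 1/(1+t) - 1 + t) (at t)" unfolding G_def
      using t by (auto intro!: derivative_eq_intros)
    have "1/(1+t) - 1 + t = t\<^sup>2/(1+t)" using t by (simp add: field_simps power2_eq_square)
    then show "0 \<le> 1/(1+t) - 1 + t" using t by simp
  qed (use assms in auto)
  then show ?thesis by (simp add: G_def)
qed

lemma exp_sub_half_square_le:
  fixes s :: real
  assumes "0 \<le> s"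
  shows "exp (s - s\<^sup>2/2) \<le> 1 + s"
  using ln_add_one_ge_quadratic[OF assms] assms
  by (metis add_nonneg_pos exp_le_cancel_iff exp_ln zero_less_one add.commute)

lemma ln_add_one_ge_Pade:
  fixes u :: real
  assumes "0 \<le> u"
  shows "2*u/(2+u) \<le> ln (1 + u)"
proof -
  define G where "G = (\<lambda>t::real. ln (1+t) - 2*t/(2+t))"
  have "G 0 \<le> G u"
  proof (rule deriv_nonneg_imp_mono[of 0 u G "\<lambda>t. 1/(1+t) - 4/(2+t)\<^sup>2"])
    fix t assume t: "t \<in> {0..u}"
    have "(G has_real_derivative 1/(1+t) - (2*(2+t) - 2*t)/(2+t)\<^sup>2) (at t)" unfolding G_def
      using t by (auto intro!: derivative_eq_intros simp: power2_eq_square)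
    then show "(G has_real_derivative 1/(1+t) - 4/(2+t)\<^sup>2) (at t)" by simp
    have "4*(1+t) \<le> (2+t)^2" by (simp add: power2_eq_square algebra_simps)
    then have "4/(2+t)\<^sup>2 \<le> 1/(1+t)" using t by (simp add: field_simps)
    then show "0 \<le> 1/(1+t) - 4/(2+t)\<^sup>2" by simp
  qed (use assms in auto)
  then show ?thesis by (simp add: G_def)
qed

lemma Bernstein_le_Bennett:
  fixes u :: real
  assumes "0 \<le> u"
  shows "u\<^sup>2/(2*(1+u/3)) \<le> (1+u) * ln (1+u) - u"
proof -
  define G where "G = (\<lambda>t::real. (1+t) * ln (1+t) - t - 3*t\<^sup>2/(6+2*t))"
  define G' where "G' = (\<lambda>t::real. ln (1+t) - (6*t*(6+2*t) - 6*t\<^sup>2) / ((6+2*t)*(6+2*t)))"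
  have "G 0 \<le> G u"
  proof (rule deriv_nonneg_imp_mono[of 0 u G G'])
    fix t assume t: "t \<in> {0..u}"
    show "(G has_real_derivative G' t) (at t)"
      unfolding G_def G'_def using t by (auto intro!: derivative_eq_intros)
    have t0: "0 \<le> t" using t by simp
    have "2*t * ((6+2*t)*(6+2*t)) - (6*t*(6+2*t) - 6*t\<^sup>2) * (2+t) = 2*t^3"
      by (simp add: power2_eq_square power3_eq_cube algebra_simps)
    with t0 have "(6*t*(6+2*t) - 6*t\<^sup>2) * (2+t) \<le> 2*t * ((6+2*t)*(6+2*t))"
      by (smt (verit) zero_le_power)
    then have "(6*t*(6+2*t) - 6*t\<^sup>2) / ((6+2*t)*(6+2*t)) \<le> 2*t/(2+t)"
      using t0 by (simp add: pos_divide_le_eq le_divide_eq mult.commute mult.left_commute)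
    then show "0 \<le> G' t"
      using ln_add_one_ge_Pade[OF t0] by (simp add: G'_def)
  qed (use assms in auto)
  moreover have "u\<^sup>2/(2*(1+u/3)) = 3*u\<^sup>2/(6+2*u)" using assms by (simp add: field_simps)
  ultimately show ?thesis by (simp add: G_def)
qed

lemma exp_minus_mult_add_one_le: "exp (- a) * (1 + a) \<le> (1::real)"
  using mult_left_mono[OF exp_ge_add_one_self[of a], of "exp (- a)"] by (simp add: mult_exp_exp)

text \<open>\<open>(e\<^sup>s - 1 - s) / s\<^sup>2\<close> is increasing on \<open>s \<ge> 0\<close>: compare the exponential series termwise.\<close>

lemma exp_remainder_le_scaled:
  fixes s a :: real
  assumes "0 \<le> s" "s \<le> a" "0 < a"
  shows "exp s - 1 - s \<le> (s/a)\<^sup>2 * (exp a - 1 - a)"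
proof -
  have remainder_sums: "(\<lambda>n. z^(n+2) / fact (n+2)) sums (exp z - 1 - z)" for z :: real
  proof -
    have "(\<lambda>n. z^n / fact n) sums exp z"
      using exp_converges[of z] by (simp add: scaleR_conv_of_real divide_inverse mult.commute)
    from sums_split_initial_segment[OF this, of 2] show ?thesis
      by (simp add: eval_nat_numeral diff_diff_eq)
  qed
  have "s^(n+2)/fact (n+2) \<le> (s/a)\<^sup>2 * (a^(n+2) / fact (n+2))" for n
  proof -
    have "s^n * s\<^sup>2 \<le> a^n * s\<^sup>2" using assms by (simp add: power_mono mult_right_mono)
    also have "a^n * s\<^sup>2 = (s/a)\<^sup>2 * a^(n+2)" using assms by (simp add: power_add power2_eq_square field_simps)
    finally have "s^(n+2) \<le> (s/a)\<^sup>2 * a^(n+2)" by (simp add: power_add power2_eq_square mult_ac)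
    then show ?thesis by (metis divide_right_mono fact_ge_zero times_divide_eq_right)
  qed
  then show ?thesis by (rule sums_le[OF _ remainder_sums sums_mult[OF remainder_sums]])
qed

section \<open>The Bennett exponent\<close>

text \<open>The smallest \<open>g\<close> with \<open>exp (\<lambda>t) \<le> 1 + \<lambda>t + g t\<^sup>2\<close> for all \<open>t \<le> y\<close>; the value at \<open>y = 0\<close> is the limit.\<close>

definition bennett_coeff :: "real \<Rightarrow> real \<Rightarrow> real" where
  "bennett_coeff lam y = (if y = 0 then lam\<^sup>2/2 else (exp (lam*y) - 1 - lam*y) / y\<^sup>2)"

lemma bennett_coeff_ge_half_square:
  assumes "0 \<le> lam" "0 \<le> y"
  shows "lam\<^sup>2/2 \<le> bennett_coeff lam y"
proof (cases "y = 0")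
  case False
  then have y: "0 < y" using assms by simp
  have "(lam*y)\<^sup>2/2 \<le> exp (lam*y) - 1 - lam*y"
    using exp_lower_Taylor_quadratic[of "lam*y"] assms by simp
  then have "((lam*y)\<^sup>2/2) / y\<^sup>2 \<le> (exp (lam*y) - 1 - lam*y) / y\<^sup>2"
    by (rule divide_right_mono) simp
  then show ?thesis using y by (simp add: bennett_coeff_def power_mult_distrib)
qed (simp add: bennett_coeff_def)

lemma bennett_coeff_nonneg: "0 \<le> lam \<Longrightarrow> 0 \<le> y \<Longrightarrow> 0 \<le> bennett_coeff lam y"
  using bennett_coeff_ge_half_square[of lam y] zero_le_power2[of lam] by linarith

lemma half_square_le_bennett_coeff_mult:
  assumes "0 \<le> lam" "0 \<le> y"
  shows "(lam*t)\<^sup>2/2 \<le> bennett_coeff lam y * t\<^sup>2"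
  using mult_right_mono[OF bennett_coeff_ge_half_square[OF assms], of "t\<^sup>2"]
  by (simp add: power_mult_distrib)

lemma exp_truncated_le:
  assumes lam: "0 \<le> lam" and y: "0 \<le> y"
  shows "exp (lam*t - bennett_coeff lam y * (if y < t then t\<^sup>2 else 0))
           \<le> 1 + lam*t + bennett_coeff lam y * (if t \<le> y then t\<^sup>2 else 0)"
proof (cases "t \<le> y")
  case True
  show ?thesis
  proof (cases "lam * t \<le> 0")
    case True
    then have "exp (lam*t) \<le> 1 + lam*t + (lam*t)\<^sup>2/2" by (rule exp_le_quadratic_Taylor_nonpos)
    with half_square_le_bennett_coeff_mult[OF lam y, of t] \<open>t \<le> y\<close> show ?thesis by simp
  next
    case False
    then have "0 < lam" "0 < t" using lam by (auto simp: zero_less_mult_iff mult_le_0_iff)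
    with \<open>t \<le> y\<close> have "exp (lam*t) - 1 - lam*t \<le> (lam*t/(lam*y))\<^sup>2 * (exp (lam*y) - 1 - lam*y)"
      by (intro exp_remainder_le_scaled) auto
    also have "\<dots> = bennett_coeff lam y * t\<^sup>2"
      using \<open>0 < lam\<close> \<open>0 < t\<close> \<open>t \<le> y\<close> by (simp add: bennett_coeff_def power_divide)
    finally show ?thesis using \<open>t \<le> y\<close> by simp
  qed
next
  case False
  then have "0 \<le> lam * t" using lam y by simp
  have "exp (lam*t - bennett_coeff lam y * t\<^sup>2) \<le> exp (lam*t - (lam*t)\<^sup>2/2)"
    using half_square_le_bennett_coeff_mult[OF lam y, of t] by simp
  also have "\<dots> \<le> 1 + lam*t" by (rule exp_sub_half_square_le[OF \<open>0 \<le> lam * t\<close>])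
  finally show ?thesis using False by simp
qed

lemma exp_truncated_bounded:
  assumes lam: "0 \<le> lam" and y: "0 \<le> y"
  shows "exp (lam*t - bennett_coeff lam y * (if y < t then t\<^sup>2 else 0)) \<le> exp (lam*y + 1)"
proof (cases "t \<le> y")
  case True
  then have "lam*t \<le> lam*y" using lam by (simp add: mult_left_mono)
  then show ?thesis using True by simp
next
  case False
  have "lam*t - bennett_coeff lam y * t\<^sup>2 \<le> lam*t - (lam*t)\<^sup>2/2"
    using half_square_le_bennett_coeff_mult[OF lam y, of t] by simp
  also have "\<dots> \<le> 1" using zero_le_power2[of "lam*t - 1"] by (simp add: power2_eq_square algebra_simps)
  also have "\<dots> \<le> lam*y + 1" using lam y by simp
  finally show ?thesis using False by simp
qed

text \<open>The minimiser over \<open>lam\<close> of \<open>-lam x + bennett_coeff lam y * v\<^sup>2\<close>.\<close>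

definition bennett_lambda :: "real \<Rightarrow> real \<Rightarrow> real \<Rightarrow> real" where
  "bennett_lambda x y v = (if y = 0 then x / v\<^sup>2 else ln (1 + x*y/v\<^sup>2) / y)"

lemma bennett_lambda_nonneg: "0 \<le> x \<Longrightarrow> 0 \<le> y \<Longrightarrow> 0 \<le> bennett_lambda x y v"
  by (simp add: bennett_lambda_def)

lemma B1_eq_exp_Bennett:
  assumes x: "0 \<le> x" and y: "0 < y" and v: "0 < v"
  defines "u \<equiv> x*y/v\<^sup>2"
  shows "B1 x y v = exp (- (v\<^sup>2/y\<^sup>2 * ((1+u) * ln (1+u) - u)))"
proof -
  have u: "0 \<le> u" using x y by (simp add: u_def)
  define c where "c = v\<^sup>2/y\<^sup>2"
  have base: "v\<^sup>2/(x*y + v\<^sup>2) = inverse (1+u)" using v by (simp add: u_def field_simps)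
  have xy: "x/y = c * u" using v y by (simp add: c_def u_def power2_eq_square field_simps)
  have "B1 x y v = exp ((x/y + c) * - ln (1+u)) * exp (x/y)"
    using y u by (simp add: B1_def base powr_def ln_inverse c_def)
  also have "\<dots> = exp (- (c * ((1+u) * ln (1+u) - u)))"
    unfolding mult_exp_exp xy by (simp add: algebra_simps)
  finally show ?thesis by (simp only: c_def)
qed

lemma exp_bennett_lambda:
  assumes x: "0 \<le> x" and y: "0 \<le> y" and v: "0 < v"
  defines "lam \<equiv> bennett_lambda x y v"
  shows "exp (- (lam*x) + bennett_coeff lam y * v\<^sup>2) = B1 x y v"
proof (cases "y = 0")
  case True
  have "- (x/v\<^sup>2 * x) + (x/v\<^sup>2)\<^sup>2/2 * v\<^sup>2 = - x\<^sup>2 / (2 * v\<^sup>2)"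
    using v by (simp add: power2_eq_square field_simps)
  then show ?thesis using True by (simp add: lam_def bennett_lambda_def bennett_coeff_def B1_def)
next
  case False
  then have "0 < y" using y by simp
  define u where "u = x*y/v\<^sup>2"
  have u: "0 \<le> u" using x y by (simp add: u_def)
  have lam_y: "lam*y = ln (1+u)" using False by (simp add: lam_def bennett_lambda_def u_def)
  define c where "c = v\<^sup>2/y\<^sup>2"
  have "lam*x = c * (u * ln (1+u))"
    using lam_y \<open>0 < y\<close> v by (simp add: c_def u_def power2_eq_square field_simps)
  moreover have "bennett_coeff lam y * v\<^sup>2 = c * (u - ln (1+u))"
    using False u by (simp add: bennett_coeff_def lam_y c_def)
  ultimately have "- (lam*x) + bennett_coeff lam y * v\<^sup>2 = - (c * ((1+u) * ln (1+u) - u))"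
    by (simp add: algebra_simps)
  moreover have "B1 x y v = exp (- (c * ((1+u) * ln (1+u) - u)))"
    using B1_eq_exp_Bennett[OF x \<open>0 < y\<close> v] by (simp only: c_def u_def)
  ultimately show ?thesis by (simp only:)
qed

lemma B1_le_B2:
  assumes x: "0 \<le> x" and y: "0 \<le> y" and v: "0 < v"
  shows "B1 x y v \<le> B2 x y v"
proof (cases "y = 0")
  case True
  then show ?thesis by (simp add: B1_def B2_def)
next
  case False
  then have "0 < y" using y by simp
  define u where "u = x*y/v\<^sup>2"
  have u: "0 \<le> u" using x y by (simp add: u_def)
  have den: "2 * (v\<^sup>2 + x*y/3) = v\<^sup>2 * (2 * (1+u/3))" using v by (simp add: u_def field_simps)
  have num: "x\<^sup>2 = v\<^sup>2 * (v\<^sup>2/y\<^sup>2 * u\<^sup>2)" using v \<open>0 < y\<close> by (simp add: u_def power2_eq_square field_simps)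
  have "x\<^sup>2 / (2 * (v\<^sup>2 + x*y/3)) = v\<^sup>2/y\<^sup>2 * u\<^sup>2 / (2 * (1+u/3))"
    unfolding den num by (rule mult_divide_mult_cancel_left) (use v in simp)
  have "B1 x y v = exp (- (v\<^sup>2/y\<^sup>2 * ((1+u) * ln (1+u) - u)))"
    using B1_eq_exp_Bennett[OF x \<open>0 < y\<close> v] by (simp only: u_def)
  also have "\<dots> \<le> exp (- (v\<^sup>2/y\<^sup>2 * (u\<^sup>2 / (2*(1+u/3)))))"
    unfolding exp_le_cancel_iff neg_le_iff_le
    by (rule mult_left_mono[OF Bernstein_le_Bennett[OF u]]) simp
  also have "\<dots> = B2 x y v"
    unfolding B2_def minus_divide_left[symmetric] \<open>x\<^sup>2 / (2 * (v\<^sup>2 + x*y/3)) = _\<close> by simp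
  finally show ?thesis .
qed

section \<open>Conditional expectations\<close>

lemma integrable_mult_bounded:
  fixes h q :: "'a \<Rightarrow> real"
  assumes "integrable M q" "h \<in> borel_measurable M" "AE \<omega> in M. \<bar>h \<omega>\<bar> \<le> K"
  shows "integrable M (\<lambda>\<omega>. h \<omega> * q \<omega>)"
proof (rule Bochner_Integration.integrable_bound[OF integrable_mult_right[OF integrable_abs[OF assms(1)], of K]])
  show "(\<lambda>\<omega>. h \<omega> * q \<omega>) \<in> borel_measurable M" using assms by measurable
  show "AE \<omega> in M. norm (h \<omega> * q \<omega>) \<le> norm (K * \<bar>q \<omega>\<bar>)"
    using assms(3) by eventually_elim (auto simp: abs_mult intro: mult_right_mono)
qed

lemma (in finite_measure) sigma_finite_subalgebra_of_subalgebra: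
  "subalgebra M F \<Longrightarrow> sigma_finite_subalgebra M F"
  by (intro finite_measure_subalgebra_is_sigma_finite)
     (simp add: finite_measure_subalgebra_def finite_measure_subalgebra_axioms_def finite_measure_axioms)

lemma (in prob_space) integral_mult_le_of_cond_exp_nonpos:
  fixes h \<phi> f p :: "'a \<Rightarrow> real"
  assumes sub: "subalgebra M F"
    and [measurable]: "h \<in> borel_measurable F" "\<phi> \<in> borel_measurable M"
    and h_nonneg: "\<And>\<omega>. 0 \<le> h \<omega>" and h_bounded: "AE \<omega> in M. h \<omega> \<le> K"
    and int_f: "integrable M f" and int_p: "integrable M p"
    and cond_f: "AE \<omega> in M. real_cond_exp M F f \<omega> \<le> 0"
    and "0 \<le> lam" and \<phi>_nonneg: "\<And>\<omega>. 0 \<le> \<phi> \<omega>"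
    and \<phi>_le: "\<And>\<omega>. \<phi> \<omega> \<le> 1 + lam * f \<omega> + c * p \<omega>"
  shows "(\<integral>\<omega>. h \<omega> * \<phi> \<omega> \<partial>M) \<le> (\<integral>\<omega>. h \<omega> * (1 + c * real_cond_exp M F p \<omega>) \<partial>M)"
proof -
  interpret sigma_finite_subalgebra M F by (rule sigma_finite_subalgebra_of_subalgebra[OF sub])
  have [measurable]: "f \<in> borel_measurable M" "p \<in> borel_measurable M"
    using int_f int_p by auto
  have hM[measurable]: "h \<in> borel_measurable M" by (rule measurable_from_subalg[OF sub assms(2)])
  have "AE \<omega> in M. \<bar>h \<omega>\<bar> \<le> K" using h_bounded by eventually_elim (simp add: h_nonneg)
  note bounded_mult = integrable_mult_bounded[OF _ hM this]
  have int_h: "integrable M h" using bounded_mult[of "\<lambda>_. 1"] by simp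
  have int_hf: "integrable M (\<lambda>\<omega>. h \<omega> * f \<omega>)" by (rule bounded_mult[OF int_f])
  have int_hp: "integrable M (\<lambda>\<omega>. h \<omega> * p \<omega>)" by (rule bounded_mult[OF int_p])
  note cond_hf = real_cond_exp_intg[OF int_hf, simplified]
  note cond_hp = real_cond_exp_intg[OF int_hp, simplified]
  have int_dom: "integrable M (\<lambda>\<omega>. h \<omega> + lam * (h \<omega> * f \<omega>) + c * (h \<omega> * p \<omega>))"
    using int_h int_hf int_hp by simp
  have h\<phi>_le: "h \<omega> * \<phi> \<omega> \<le> h \<omega> + lam * (h \<omega> * f \<omega>) + c * (h \<omega> * p \<omega>)" for \<omega>
    using mult_left_mono[OF \<phi>_le h_nonneg, of \<omega> \<omega>] by (simp add: algebra_simps)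
  have "norm (h \<omega> * \<phi> \<omega>) \<le> norm (h \<omega> + lam * (h \<omega> * f \<omega>) + c * (h \<omega> * p \<omega>))" for \<omega>
    using h\<phi>_le[of \<omega>] h_nonneg[of \<omega>] \<phi>_nonneg[of \<omega>] by (simp add: abs_le_iff)
  then have int_h\<phi>: "integrable M (\<lambda>\<omega>. h \<omega> * \<phi> \<omega>)"
    by (intro Bochner_Integration.integrable_bound[OF int_dom] AE_I2) auto
  have "(\<integral>\<omega>. h \<omega> * f \<omega> \<partial>M) = (\<integral>\<omega>. h \<omega> * real_cond_exp M F f \<omega> \<partial>M)"
    using cond_hf(2) by simp
  also have "\<dots> \<le> (\<integral>\<omega>. 0 \<partial>M)"
  proof (rule integral_mono_AE[OF cond_hf(1) integrable_zero])
    show "AE \<omega> in M. h \<omega> * real_cond_exp M F f \<omega> \<le> 0"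
      using cond_f by eventually_elim (simp add: mult_nonneg_nonpos h_nonneg)
  qed
  finally have hf: "lam * (\<integral>\<omega>. h \<omega> * f \<omega> \<partial>M) \<le> 0"
    using \<open>0 \<le> lam\<close> by (simp add: mult_nonneg_nonpos)
  have "(\<integral>\<omega>. h \<omega> * \<phi> \<omega> \<partial>M) \<le> (\<integral>\<omega>. h \<omega> + lam * (h \<omega> * f \<omega>) + c * (h \<omega> * p \<omega>) \<partial>M)"
    by (rule integral_mono[OF int_h\<phi> int_dom h\<phi>_le])
  also have "\<dots> = (\<integral>\<omega>. h \<omega> \<partial>M) + lam * (\<integral>\<omega>. h \<omega> * f \<omega> \<partial>M) + c * (\<integral>\<omega>. h \<omega> * p \<omega> \<partial>M)"
    using int_h int_hf int_hp by simp
  also have "\<dots> \<le> (\<integral>\<omega>. h \<omega> \<partial>M) + c * (\<integral>\<omega>. h \<omega> * real_cond_exp M F p \<omega> \<partial>M)"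
    using hf cond_hp(2) by simp
  also have "\<dots> = (\<integral>\<omega>. h \<omega> * (1 + c * real_cond_exp M F p \<omega>) \<partial>M)"
    using int_h cond_hp(1) by (simp add: algebra_simps)
  finally show ?thesis .
qed

lemma (in finite_measure) measure_le_integral_indicator:
  fixes f :: "'a \<Rightarrow> real"
  assumes "D \<in> sets M" "integrable M (\<lambda>\<omega>. f \<omega> * indicator D \<omega>)" "\<And>\<omega>. \<omega> \<in> D \<Longrightarrow> 1 \<le> f \<omega>"
  shows "measure M D \<le> (\<integral>\<omega>. f \<omega> * indicator D \<omega> \<partial>M)"
proof -
  have "measure M D = (\<integral>\<omega>. indicator D \<omega> \<partial>M)"
    using sets.sets_into_space[OF assms(1)] by (simp add: Int_absorb2)
  also have "\<dots> \<le> (\<integral>\<omega>. f \<omega> * indicator D \<omega> \<partial>M)"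
    by (rule integral_mono[OF integrable_real_indicator assms(2)])
       (use assms in \<open>auto simp: indicator_def emeasure_finite less_top[symmetric]\<close>)
  finally show ?thesis .
qed

section \<open>The exponential supermartingale\<close>

locale supermartingale_differences = prob_space M
  for M :: "'a measure" +
  fixes F :: "nat \<Rightarrow> 'a measure" and \<xi> :: "nat \<Rightarrow> 'a \<Rightarrow> real" and n :: nat
  assumes subalgebra_F: "\<And>i. i \<le> n \<Longrightarrow> subalgebra M (F i)"
    and sets_F_mono: "\<And>i j. i \<le> j \<Longrightarrow> j \<le> n \<Longrightarrow> sets (F i) \<subseteq> sets (F j)"
    and \<xi>_measurable: "\<And>i. i \<in> {1..n} \<Longrightarrow> \<xi> i \<in> borel_measurable (F i)"
    and \<xi>_integrable: "\<And>i. i \<in> {1..n} \<Longrightarrow> integrable M (\<xi> i)"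
    and cond_exp_\<xi>_nonpos: "\<And>i. i \<in> {1..n} \<Longrightarrow> AE \<omega> in M. real_cond_exp M (F (i - 1)) (\<xi> i) \<omega> \<le> 0"
    and \<xi>_square_integrable: "\<And>i. i \<in> {1..n} \<Longrightarrow> integrable M (\<lambda>\<omega>. (\<xi> i \<omega>)\<^sup>2)"
begin

lemma space_F: "m \<le> n \<Longrightarrow> space (F m) = space M"
  using subalgebra_F by (simp add: subalgebra_def)

lemma sets_F_subset: "m \<le> n \<Longrightarrow> sets (F m) \<subseteq> sets M"
  using subalgebra_F by (simp add: subalgebra_def)

lemma measurable_F_mono:
  assumes "i \<le> m" "m \<le> n" "f \<in> borel_measurable (F i)"
  shows "f \<in> borel_measurable (F m)"
proof -
  have "subalgebra (F m) (F i)"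
    using subalgebra_F[of i] subalgebra_F[of m] sets_F_mono[of i m] assms by (auto simp: subalgebra_def)
  then show ?thesis using assms(3) by (rule measurable_from_subalg)
qed

lemma measurable_F_M: "m \<le> n \<Longrightarrow> f \<in> borel_measurable (F m) \<Longrightarrow> f \<in> borel_measurable M"
  by (rule measurable_from_subalg[OF subalgebra_F])

lemma \<xi>_measurable_F: "i \<in> {1..m} \<Longrightarrow> m \<le> n \<Longrightarrow> \<xi> i \<in> borel_measurable (F m)"
  by (rule measurable_F_mono[of i m]) (auto intro: \<xi>_measurable)

lemma partial_sum_measurable_F: "k \<le> m \<Longrightarrow> m \<le> n \<Longrightarrow> partial_sum \<xi> k \<in> borel_measurable (F m)"
  unfolding partial_sum_def by (intro borel_measurable_sum \<xi>_measurable_F) auto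

lemma G_var_measurable_F:
  assumes "k \<le> m" "m \<le> n"
  shows "G_var M F \<xi> y k \<in> borel_measurable (F m)"
  unfolding G_var_def[abs_def]
proof (intro borel_measurable_sum)
  fix i assume "i \<in> {1..k}"
  then have [measurable]: "\<xi> i \<in> borel_measurable (F m)"
    "real_cond_exp M (F (i - 1)) (\<lambda>w. (\<xi> i w)\<^sup>2 * indicator {w. \<xi> i w \<le> y} w) \<in> borel_measurable (F m)"
    using assms by (auto intro: \<xi>_measurable_F measurable_F_mono[of "i - 1" m])
  show "(\<lambda>\<omega>. real_cond_exp M (F (i - 1)) (\<lambda>w. (\<xi> i w)\<^sup>2 * indicator {w. \<xi> i w \<le> y} w) \<omega>
          + (\<xi> i \<omega>)\<^sup>2 * indicator {w. y < \<xi> i w} \<omega>) \<in> borel_measurable (F m)"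
    by measurable
qed

end

locale bennett_supermartingale = supermartingale_differences +
  fixes y lam :: real
  assumes y_nonneg: "0 \<le> y" and lam_nonneg: "0 \<le> lam"
begin

definition "g = bennett_coeff lam y"
definition "small_sq i \<omega> = (\<xi> i \<omega>)\<^sup>2 * indicator {w. \<xi> i w \<le> y} \<omega>"
definition "large_sq i \<omega> = (\<xi> i \<omega>)\<^sup>2 * indicator {w. y < \<xi> i w} \<omega>"
definition "cond_small_sq i = real_cond_exp M (F (i - 1)) (small_sq i)"
definition "Z k \<omega> = exp (lam * partial_sum \<xi> k \<omega> - g * G_var M F \<xi> y k \<omega>)"

lemma g_nonneg: "0 \<le> g"
  unfolding g_def by (rule bennett_coeff_nonneg[OF lam_nonneg y_nonneg])

lemma G_var_eq: "G_var M F \<xi> y k \<omega> = (\<Sum>i=1..k. cond_small_sq i \<omega> + large_sq i \<omega>)"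
  by (simp add: G_var_def cond_small_sq_def small_sq_def[abs_def] large_sq_def)

lemma Z_0: "Z 0 \<omega> = 1"
  by (simp add: Z_def partial_sum_def G_var_def)

lemma Z_Suc: "Z (Suc m) \<omega> = Z m \<omega> * exp (lam * \<xi> (Suc m) \<omega> - g * large_sq (Suc m) \<omega>)
                                * exp (- g * cond_small_sq (Suc m) \<omega>)"
  by (simp add: Z_def G_var_eq partial_sum_def mult_exp_exp algebra_simps)

lemma Z_pos: "0 < Z k \<omega>"
  by (simp add: Z_def)

lemma Z_measurable_F: "k \<le> m \<Longrightarrow> m \<le> n \<Longrightarrow> Z k \<in> borel_measurable (F m)"
  using partial_sum_measurable_F G_var_measurable_F unfolding Z_def[abs_def] by measurable

lemma exp_increment_le: "exp (lam * \<xi> i \<omega> - g * large_sq i \<omega>) \<le> 1 + lam * \<xi> i \<omega> + g * small_sq i \<omega>"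
  using exp_truncated_le[OF lam_nonneg y_nonneg, of "\<xi> i \<omega>"]
  by (cases "\<xi> i \<omega> \<le> y") (simp_all add: g_def small_sq_def large_sq_def)

lemma exp_increment_bounded: "exp (lam * \<xi> i \<omega> - g * large_sq i \<omega>) \<le> exp (lam * y + 1)"
  using exp_truncated_bounded[OF lam_nonneg y_nonneg, of "\<xi> i \<omega>"]
  by (cases "\<xi> i \<omega> \<le> y") (simp_all add: g_def large_sq_def)

lemma AE_cond_small_sq_nonneg: "AE \<omega> in M. \<forall>i\<in>{1..n}. 0 \<le> cond_small_sq i \<omega>"
proof (rule eventually_ball_finite)
  show "\<forall>i\<in>{1..n}. AE \<omega> in M. 0 \<le> cond_small_sq i \<omega>"
  proof
    fix i assume i: "i \<in> {1..n}"
    have "i - 1 \<le> n" using i by auto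
    interpret sigma_finite_subalgebra M "F (i - 1)"
      by (rule sigma_finite_subalgebra_of_subalgebra[OF subalgebra_F[OF \<open>i - 1 \<le> n\<close>]])
    have [measurable]: "\<xi> i \<in> borel_measurable M"
      using i by (intro measurable_F_M[of i] \<xi>_measurable) auto
    show "AE \<omega> in M. 0 \<le> cond_small_sq i \<omega>"
      unfolding cond_small_sq_def by (rule real_cond_exp_pos) (auto simp: small_sq_def[abs_def])
  qed
qed simp

text \<open>The increments of \<open>Z\<close> are bounded, so \<open>Z\<close> is bounded a.e.; this settles every integrability question below.\<close>

lemma Z_le_power:
  assumes "\<forall>i\<in>{1..n}. 0 \<le> cond_small_sq i \<omega>" "m \<le> n"
  shows "Z m \<omega> \<le> exp (lam * y + 1) ^ m"
  using assms(2)
proof (induction m)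
  case (Suc m)
  have "exp (- g * cond_small_sq (Suc m) \<omega>) \<le> 1"
    using assms(1) Suc.prems g_nonneg by simp
  then have "Z (Suc m) \<omega> \<le> Z m \<omega> * exp (lam * \<xi> (Suc m) \<omega> - g * large_sq (Suc m) \<omega>)"
    unfolding Z_Suc using Z_pos[of m \<omega>] by (simp add: mult_left_le)
  also have "\<dots> \<le> exp (lam * y + 1) ^ m * exp (lam * y + 1)"
    using Suc Z_pos[of m \<omega>] exp_increment_bounded by (intro mult_mono) auto
  finally show ?case by (simp add: mult.commute)
qed (simp add: Z_0)

lemma AE_Z_le_power: "AE \<omega> in M. \<forall>m\<le>n. Z m \<omega> \<le> exp (lam * y + 1) ^ m"
  using AE_cond_small_sq_nonneg by eventually_elim (auto intro: Z_le_power)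

lemma integrable_Z_indicator:
  assumes "k \<le> n" "C \<in> sets M"
  shows "integrable M (\<lambda>\<omega>. Z k \<omega> * indicator C \<omega>)"
proof (rule integrable_const_bound[where B = "exp (lam * y + 1) ^ k"])
  show "AE \<omega> in M. norm (Z k \<omega> * indicator C \<omega>) \<le> exp (lam * y + 1) ^ k"
    using AE_Z_le_power by eventually_elim (use assms Z_pos[of k] in \<open>auto simp: indicator_def abs_of_pos\<close>)
  show "(\<lambda>\<omega>. Z k \<omega> * indicator C \<omega>) \<in> borel_measurable M"
    using measurable_F_M[OF assms(1) Z_measurable_F[of k k]] assms by measurable
qed

lemma integral_Z_damped_le:
  assumes m: "m < n" and C: "C \<in> sets (F m)"
  defines "c \<equiv> cond_small_sq (Suc m)"
  shows "(\<integral>\<omega>. Z m \<omega> * indicator C \<omega> * exp (- g * c \<omega>) * (1 + g * c \<omega>) \<partial>M)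
           \<le> (\<integral>\<omega>. Z m \<omega> * indicator C \<omega> \<partial>M)"
proof (rule integral_mono_AE)
  have [measurable]: "Z m \<in> borel_measurable (F m)" "c \<in> borel_measurable (F m)" "C \<in> sets (F m)"
    using Z_measurable_F[of m m] m C by (auto simp: c_def cond_small_sq_def)
  have le: "Z m \<omega> * indicator C \<omega> * exp (- g * c \<omega>) * (1 + g * c \<omega>) \<le> Z m \<omega> * indicator C \<omega>" for \<omega>
    using mult_left_mono[OF exp_minus_mult_add_one_le less_imp_le[OF Z_pos[of m \<omega>]]]
    by (simp add: indicator_def mult.assoc)
  then show "AE \<omega> in M. Z m \<omega> * indicator C \<omega> * exp (- g * c \<omega>) * (1 + g * c \<omega>) \<le> Z m \<omega> * indicator C \<omega>"
    by simp
  show int_ZC: "integrable M (\<lambda>\<omega>. Z m \<omega> * indicator C \<omega>)"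
    using m C sets_F_subset[of m] by (intro integrable_Z_indicator) auto
  show "integrable M (\<lambda>\<omega>. Z m \<omega> * indicator C \<omega> * exp (- g * c \<omega>) * (1 + g * c \<omega>))"
  proof (rule Bochner_Integration.integrable_bound[OF int_ZC])
    have "(\<lambda>\<omega>. Z m \<omega> * indicator C \<omega> * exp (- g * c \<omega>) * (1 + g * c \<omega>)) \<in> borel_measurable (F m)"
      by measurable
    then show "(\<lambda>\<omega>. Z m \<omega> * indicator C \<omega> * exp (- g * c \<omega>) * (1 + g * c \<omega>)) \<in> borel_measurable M"
      using m by (intro measurable_F_M[of m]) auto
    show "AE \<omega> in M. norm (Z m \<omega> * indicator C \<omega> * exp (- g * c \<omega>) * (1 + g * c \<omega>))
                        \<le> norm (Z m \<omega> * indicator C \<omega>)"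
      using AE_cond_small_sq_nonneg
    proof eventually_elim
      case (elim \<omega>)
      then have "0 \<le> c \<omega>" using m by (simp add: c_def)
      then have "0 \<le> Z m \<omega> * indicator C \<omega> * exp (- g * c \<omega>) * (1 + g * c \<omega>)"
        using g_nonneg Z_pos[of m \<omega>] by simp
      moreover have "0 \<le> Z m \<omega> * indicator C \<omega>" using Z_pos[of m \<omega>] by simp
      ultimately show ?case using le[of \<omega>] by (metis abs_of_nonneg real_norm_def)
    qed
  qed
qed

lemma integral_Z_Suc_le:
  assumes m: "m < n" and C: "C \<in> sets (F m)"
  shows "(\<integral>\<omega>. Z (Suc m) \<omega> * indicator C \<omega> \<partial>M) \<le> (\<integral>\<omega>. Z m \<omega> * indicator C \<omega> \<partial>M)"
proof -
  have i: "Suc m \<in> {1..n}" using m by simp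
  define c where "c = cond_small_sq (Suc m)"
  define h where "h \<omega> = Z m \<omega> * indicator C \<omega> * exp (- g * c \<omega>)" for \<omega>
  have [measurable]: "Z m \<in> borel_measurable (F m)" "c \<in> borel_measurable (F m)" "C \<in> sets (F m)"
    using Z_measurable_F[of m m] m C by (auto simp: c_def cond_small_sq_def)
  have [measurable]: "\<xi> (Suc m) \<in> borel_measurable M"
    using i by (intro measurable_F_M[of "Suc m"] \<xi>_measurable) auto
  have "(\<integral>\<omega>. Z (Suc m) \<omega> * indicator C \<omega> \<partial>M)
      = (\<integral>\<omega>. h \<omega> * exp (lam * \<xi> (Suc m) \<omega> - g * large_sq (Suc m) \<omega>) \<partial>M)"
    by (simp add: h_def c_def Z_Suc algebra_simps)
  also have "\<dots> \<le> (\<integral>\<omega>. h \<omega> * (1 + g * c \<omega>) \<partial>M)"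
    unfolding c_def cond_small_sq_def diff_Suc_1
  proof (rule integral_mult_le_of_cond_exp_nonpos[OF subalgebra_F,
        where f = "\<xi> (Suc m)" and p = "small_sq (Suc m)" and lam = lam and c = g])
    show "AE \<omega> in M. h \<omega> \<le> exp (lam * y + 1) ^ m"
      using AE_cond_small_sq_nonneg AE_Z_le_power
    proof eventually_elim
      case (elim \<omega>)
      then have "h \<omega> \<le> Z m \<omega>" "Z m \<omega> \<le> exp (lam * y + 1) ^ m"
        using i m g_nonneg Z_pos[of m \<omega>] by (auto simp: h_def c_def indicator_def)
      then show ?case by linarith
    qed
    show "integrable M (small_sq (Suc m))"
      by (rule Bochner_Integration.integrable_bound[OF \<xi>_square_integrable[OF i]])
         (auto simp: small_sq_def[abs_def] indicator_def)
    show "0 \<le> h \<omega>" for \<omega>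
      using Z_pos[of m \<omega>] by (simp add: h_def)
    show "h \<in> borel_measurable (F m)"
      unfolding h_def by measurable
  qed (use i lam_nonneg exp_increment_le \<xi>_integrable[OF i] cond_exp_\<xi>_nonpos[OF i]
       in \<open>auto simp: large_sq_def[abs_def]\<close>)
  also have "\<dots> \<le> (\<integral>\<omega>. Z m \<omega> * indicator C \<omega> \<partial>M)"
    using integral_Z_damped_le[OF m C] by (simp add: h_def c_def)
  finally show ?thesis .
qed

section \<open>Optional stopping at the first crossing\<close>

definition "crossing x v k = {\<omega> \<in> space M. x \<le> partial_sum \<xi> k \<omega> \<and> G_var M F \<xi> y k \<omega> \<le> v\<^sup>2}"
definition "crossed x v m = (\<Union>k\<in>{1..m}. crossing x v k)"

lemma crossing_in_F:
  assumes "k \<le> m" "m \<le> n"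
  shows "crossing x v k \<in> sets (F m)"
proof -
  have [measurable]: "partial_sum \<xi> k \<in> borel_measurable (F m)" "G_var M F \<xi> y k \<in> borel_measurable (F m)"
    using assms by (auto intro: partial_sum_measurable_F G_var_measurable_F)
  have "{\<omega> \<in> space (F m). x \<le> partial_sum \<xi> k \<omega> \<and> G_var M F \<xi> y k \<omega> \<le> v\<^sup>2} \<in> sets (F m)"
    by measurable
  then show ?thesis using space_F[OF assms(2)] by (simp add: crossing_def)
qed

lemma crossed_in_F: "m \<le> n \<Longrightarrow> crossed x v m \<in> sets (F m)"
  unfolding crossed_def by (intro sets.finite_UN crossing_in_F) auto

lemma one_le_Z_on_crossing:
  assumes "\<omega> \<in> crossing x v k"
  shows "1 \<le> exp (- (lam*x) + g * v\<^sup>2) * Z k \<omega>"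
proof -
  have "lam * x \<le> lam * partial_sum \<xi> k \<omega>" "g * G_var M F \<xi> y k \<omega> \<le> g * v\<^sup>2"
    using assms lam_nonneg g_nonneg by (auto simp: crossing_def mult_left_mono)
  then show ?thesis by (simp add: Z_def mult_exp_exp)
qed

lemma crossing_in_events: "k \<le> n \<Longrightarrow> crossing x v k \<in> sets M"
  using crossing_in_F[of k k] sets_F_subset[of k] by auto

lemma crossed_in_events: "m \<le> n \<Longrightarrow> crossed x v m \<in> sets M"
  using crossed_in_F[of m] sets_F_subset[of m] by auto

lemma crossed_Suc: "crossed x v (Suc m) = crossed x v m \<union> (crossing x v (Suc m) - crossed x v m)"
  by (auto simp: crossed_def atLeastAtMostSuc_conv)

text \<open>\<open>Z\<close> stopped at the first crossing is a supermartingale.\<close>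

lemma integral_Z_stopped_Suc_le:
  fixes x v :: real
  assumes m: "m < n"
  defines "D \<equiv> crossing x v (Suc m) - crossed x v m"
  shows "(\<integral>\<omega>. Z (Suc m) \<omega> * indicator D \<omega> \<partial>M)
           + (\<integral>\<omega>. Z (Suc m) \<omega> * indicator (space M - crossed x v (Suc m)) \<omega> \<partial>M)
         \<le> (\<integral>\<omega>. Z m \<omega> * indicator (space M - crossed x v m) \<omega> \<partial>M)"
proof -
  have sets: "D \<in> sets M" "space M - crossed x v (Suc m) \<in> sets M"
    using m crossing_in_events crossed_in_events by (auto simp: D_def)
  have "(\<integral>\<omega>. Z (Suc m) \<omega> * indicator D \<omega> \<partial>M)
          + (\<integral>\<omega>. Z (Suc m) \<omega> * indicator (space M - crossed x v (Suc m)) \<omega> \<partial>M)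
      = (\<integral>\<omega>. Z (Suc m) \<omega> * (indicator D \<omega> + indicator (space M - crossed x v (Suc m)) \<omega>) \<partial>M)"
    using m sets by (simp add: distrib_left integrable_Z_indicator)
  also have "\<dots> = (\<integral>\<omega>. Z (Suc m) \<omega> * indicator (space M - crossed x v m) \<omega> \<partial>M)"
    using sets.sets_into_space[OF sets(1)] crossed_Suc[of x v m]
    by (intro Bochner_Integration.integral_cong) (auto simp: D_def indicator_def)
  also have "\<dots> \<le> (\<integral>\<omega>. Z m \<omega> * indicator (space M - crossed x v m) \<omega> \<partial>M)"
    using m sets.compl_sets[OF crossed_in_F[of m]] space_F[of m]
    by (intro integral_Z_Suc_le) auto
  finally show ?thesis .
qed

lemma measure_crossed_Suc_le:
  fixes x v :: real
  defines "B \<equiv> exp (- (lam*x) + g * v\<^sup>2)"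
  assumes m: "m < n"
    and IH: "measure M (crossed x v m) + B * (\<integral>\<omega>. Z m \<omega> * indicator (space M - crossed x v m) \<omega> \<partial>M) \<le> B"
  shows "measure M (crossed x v (Suc m))
           + B * (\<integral>\<omega>. Z (Suc m) \<omega> * indicator (space M - crossed x v (Suc m)) \<omega> \<partial>M) \<le> B"
proof -
  define D where "D = crossing x v (Suc m) - crossed x v m"
  have D_sets: "D \<in> sets M" using m crossing_in_events crossed_in_events by (auto simp: D_def)
  have "measure M D \<le> (\<integral>\<omega>. B * Z (Suc m) \<omega> * indicator D \<omega> \<partial>M)"
    using m D_sets one_le_Z_on_crossing
    by (intro measure_le_integral_indicator) (auto simp: B_def D_def mult.assoc integrable_Z_indicator)
  then have "measure M D \<le> B * (\<integral>\<omega>. Z (Suc m) \<omega> * indicator D \<omega> \<partial>M)"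
    by (simp add: mult.assoc)
  moreover have "measure M (crossed x v (Suc m)) = measure M (crossed x v m) + measure M D"
    unfolding crossed_Suc[of x v m] D_def[symmetric] using m D_sets crossed_in_events
    by (intro finite_measure_Union) (auto simp: D_def)
  moreover have "B * (\<integral>\<omega>. Z (Suc m) \<omega> * indicator D \<omega> \<partial>M)
                   + B * (\<integral>\<omega>. Z (Suc m) \<omega> * indicator (space M - crossed x v (Suc m)) \<omega> \<partial>M)
                 \<le> B * (\<integral>\<omega>. Z m \<omega> * indicator (space M - crossed x v m) \<omega> \<partial>M)"
    using integral_Z_stopped_Suc_le[OF m, of x v] by (simp add: B_def D_def flip: distrib_left)
  ultimately show ?thesis using IH by linarith
qed

lemma measure_crossed_le:
  assumes "m \<le> n"
  shows "measure M (crossed x v m)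
           + exp (- (lam*x) + g * v\<^sup>2) * (\<integral>\<omega>. Z m \<omega> * indicator (space M - crossed x v m) \<omega> \<partial>M)
         \<le> exp (- (lam*x) + g * v\<^sup>2)"
  using assms
proof (induction m)
  case 0
  then show ?case by (simp add: crossed_def Z_0 prob_space)
next
  case (Suc m)
  then show ?case by (intro measure_crossed_Suc_le) auto
qed

lemma measure_crossing_le_exp:
  "measure M {\<omega> \<in> space M. \<exists>k\<in>{1..n}. partial_sum \<xi> k \<omega> \<ge> x \<and> G_var M F \<xi> y k \<omega> \<le> v\<^sup>2}
     \<le> exp (- (lam*x) + g * v\<^sup>2)"
proof -
  have "{\<omega> \<in> space M. \<exists>k\<in>{1..n}. partial_sum \<xi> k \<omega> \<ge> x \<and> G_var M F \<xi> y k \<omega> \<le> v\<^sup>2} = crossed x v n"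
    by (auto simp: crossed_def crossing_def)
  moreover have "0 \<le> exp (- (lam*x) + g * v\<^sup>2) * (\<integral>\<omega>. Z n \<omega> * indicator (space M - crossed x v n) \<omega> \<partial>M)"
    using Z_pos[of n] by (intro mult_nonneg_nonneg integral_nonneg_AE) (simp_all add: less_imp_le)
  ultimately show ?thesis
    using measure_crossed_le[of n x v] by simp
qed

end

theorem theorem2p1:
  fixes M :: "'a measure" and F :: "nat \<Rightarrow> 'a measure"
    and \<xi> :: "nat \<Rightarrow> 'a \<Rightarrow> real" and n :: nat and x y v :: real
  assumes "prob_space M"
    and "\<And>i. i \<le> n \<Longrightarrow> subalgebra M (F i)"
    and "\<And>i j. i \<le> j \<Longrightarrow> j \<le> n \<Longrightarrow> sets (F i) \<subseteq> sets (F j)"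
    and "sets (F 0) = {{}, space M}"
    and "\<And>i. i \<in> {1..n} \<Longrightarrow> \<xi> i \<in> borel_measurable (F i)"
    and "\<And>i. i \<in> {1..n} \<Longrightarrow> integrable M (\<xi> i)"
    and "\<And>i. i \<in> {1..n} \<Longrightarrow> AE \<omega> in M. real_cond_exp M (F (i - 1)) (\<xi> i) \<omega> \<le> 0"
    and "\<And>i. i \<in> {1..n} \<Longrightarrow> integrable M (\<lambda>\<omega>. (\<xi> i \<omega>)\<^sup>2)"
    and "x \<ge> 0" and "y \<ge> 0" and "v > 0"
  shows "measure M {\<omega> \<in> space M. \<exists>k\<in>{1..n}. partial_sum \<xi> k \<omega> \<ge> x \<and> G_var M F \<xi> y k \<omega> \<le> v\<^sup>2}
           \<le> B1 x y v
         \<and> B1 x y v \<le> B2 x y v"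
proof -
  interpret bennett_supermartingale M F \<xi> n y "bennett_lambda x y v"
    by (intro bennett_supermartingale.intro supermartingale_differences.intro
          bennett_supermartingale_axioms.intro supermartingale_differences_axioms.intro)
       (use assms bennett_lambda_nonneg in auto)
  have "measure M {\<omega> \<in> space M. \<exists>k\<in>{1..n}. partial_sum \<xi> k \<omega> \<ge> x \<and> G_var M F \<xi> y k \<omega> \<le> v\<^sup>2}
          \<le> exp (- (bennett_lambda x y v * x) + g * v\<^sup>2)"
    by (rule measure_crossing_le_exp)
  also have "\<dots> = B1 x y v"
    unfolding g_def using assms(9-11) by (rule exp_bennett_lambda)
  finally show ?thesis using B1_le_B2[OF assms(9-11)] by simp
qed

end
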